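(* Let $G$ be a finitely generated group and $(X,\mathcal{U})$ a uniform space. If $\Phi\in Act(G,X)$ is topologically stable, then it is $\mu$-topologically stable for any non-atomic Borel measure $\mu$ on $X$.
   Context: $D[x]=\{y:(x,y)\in D\}$. $Act(G,X)$: maps $\Phi:G\times X\to X$ with each $\Phi_g$ a uniform equivalence, $\Phi_e=\mathrm{id}$, $\Phi_{g_1g_2}=\Phi_{g_1}\circ\Phi_{g_2}$. Generating sets are finite symmetric. Non-atomic: $\mu(\{x\})=0$ for all $x$. $\Phi$ is topologically stable if for some generating set $S$: for every $E\in\mathcal{U}$ there is $D\in\mathcal{U}$ such that whenever $\Psi\in Act(G,X)$ satisfies $(\Psi_s(x),\Phi_s(x))\in D$ for all $x\in X,s\in S$, there is a continuous $f:X\to X$ with $\Phi_g\circ f=f\circ\Psi_g$ for all $g$ and $(x,f(x))\in E$ for all $x$. For set-valued $H:X\to\mathcal{P}(X)$: $Dom(H)=\{x:H(x)\neq\emptyset\}$; $(Id,H)\in E$ means $H(x)\subset E[x]$ for all $x$; $H$ is upper semi-continuous if for each $x\in Dom(H)$ and open $O\supset H(x)$ there is $D\in\mathcal{U}$ with $H(y)\subset O$ whenever $(x,y)\in D$. $\Phi$ is $\mu$-topologically stable if for some generating set $S$: for every $E\in\mathcal{U}$ there is $D\in\mathcal{U}$ such that whenever $\Psi\in Act(G,X)$ satisfies $(\Psi_s(x),\Phi_s(x))\in D$ for all $x,s\in S$, there is an upper semi-continuous compact-valued $H$ with measurable domain such that $\mu(X\setminus Dom(H))=0$, $\mu(H(x))=0$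 for all $x$, $(Id,H)\in E$, and $\Phi_g(H(x))=H(\Psi_g(x))$ for all $g,x$. *)

theory Defs
  imports "HOL-Analysis.Analysis" "HOL-Algebra.Generated_Groups"
begin

definition entourage :: "('a::uniform_space \<times> 'a) set \<Rightarrow> bool" where
  "entourage E \<longleftrightarrow> eventually (\<lambda>p. p \<in> E) uniformity"

definition uniform_equiv :: "('a::uniform_space \<Rightarrow> 'a) \<Rightarrow> bool" where
  "uniform_equiv f \<longleftrightarrow> bij f \<and> uniformly_continuous_on UNIV f \<and> uniformly_continuous_on UNIV (inv_into UNIV f)"

definition Act :: "('g, 'b) monoid_scheme \<Rightarrow> ('g \<Rightarrow> 'a::uniform_space \<Rightarrow> 'a) \<Rightarrow> bool" where
  "Act G \<Phi> \<longleftrightarrow>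
     (\<forall>g\<in>carrier G. uniform_equiv (\<Phi> g)) \<and>
     \<Phi> \<one>\<^bsub>G\<^esub> = id \<and>
     (\<forall>g1\<in>carrier G. \<forall>g2\<in>carrier G. \<Phi> (g1 \<otimes>\<^bsub>G\<^esub> g2) = \<Phi> g1 \<circ> \<Phi> g2)"

definition gen_set :: "('g, 'b) monoid_scheme \<Rightarrow> 'g set \<Rightarrow> bool" where
  "gen_set G S \<longleftrightarrow> finite S \<and> S \<subseteq> carrier G \<and> (\<forall>s\<in>S. inv\<^bsub>G\<^esub> s \<in> S) \<and> generate G S = carrier G"

definition finitely_generated :: "('g, 'b) monoid_scheme \<Rightarrow> bool" where
  "finitely_generated G \<longleftrightarrow> (\<exists>S. finite S \<and> S \<subseteq> carrier G \<and> generate G S = carrier G)"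

definition topologically_stable :: "('g, 'b) monoid_scheme \<Rightarrow> ('g \<Rightarrow> 'a::uniform_space \<Rightarrow> 'a) \<Rightarrow> bool" where
  "topologically_stable G \<Phi> \<longleftrightarrow>
     (\<exists>S. gen_set G S \<and>
       (\<forall>E. entourage E \<longrightarrow>
         (\<exists>D. entourage D \<and>
           (\<forall>\<Psi>. Act G \<Psi> \<and> (\<forall>x. \<forall>s\<in>S. (\<Psi> s x, \<Phi> s x) \<in> D) \<longrightarrow>
             (\<exists>f. continuous_on UNIV f \<and>
                  (\<forall>g\<in>carrier G. \<Phi> g \<circ> f = f \<circ> \<Psi> g) \<and>
                  (\<forall>x. (x, f x) \<in> E))))))"

definition Dom :: "('a \<Rightarrow> 'c set) \<Rightarrow> 'a set" where
  "Dom H = {x. H x \<noteq> {}}"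

definition usc :: "('a::uniform_space \<Rightarrow> 'a set) \<Rightarrow> bool" where
  "usc H \<longleftrightarrow> (\<forall>x\<in>Dom H. \<forall>U. open U \<and> H x \<subseteq> U \<longrightarrow>
                 (\<exists>D. entourage D \<and> (\<forall>y. (x, y) \<in> D \<longrightarrow> H y \<subseteq> U)))"

definition Id_H_in :: "('a \<Rightarrow> 'a set) \<Rightarrow> ('a \<times> 'a) set \<Rightarrow> bool" where
  "Id_H_in H E \<longleftrightarrow> (\<forall>x. H x \<subseteq> {y. (x, y) \<in> E})"

definition nonatomic :: "'a measure \<Rightarrow> bool" where
  "nonatomic M \<longleftrightarrow> (\<forall>x. {x} \<in> null_sets M)"

definition mu_topologically_stable ::
  "'a::uniform_space measure \<Rightarrow> ('g, 'b) monoid_scheme \<Rightarrow> ('g \<Rightarrow> 'a \<Rightarrow> 'a) \<Rightarrow> bool" where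
  "mu_topologically_stable M G \<Phi> \<longleftrightarrow>
     (\<exists>S. gen_set G S \<and>
       (\<forall>E. entourage E \<longrightarrow>
         (\<exists>D. entourage D \<and>
           (\<forall>\<Psi>. Act G \<Psi> \<and> (\<forall>x. \<forall>s\<in>S. (\<Psi> s x, \<Phi> s x) \<in> D) \<longrightarrow>
             (\<exists>H. usc H \<and> (\<forall>x. compact (H x)) \<and>
                  Dom H \<in> sets M \<and> UNIV - Dom H \<in> null_sets M \<and>
                  (\<forall>x. H x \<in> null_sets M) \<and>
                  Id_H_in H E \<and>
                  (\<forall>g\<in>carrier G. \<forall>x. \<Phi> g ` H x = H (\<Psi> g x)))))))"

end

theory Submission
  imports Defs
begin

text \<open>A topological semiconjugacy \<open>f\<close> is already a \<open>\<mu>\<close>-semiconjugacy with the singleton-valued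
  map \<open>H x = {f x}\<close>: continuity of \<open>f\<close> gives upper semicontinuity, the domain is everything,
  and the values are null because \<open>\<mu>\<close> has no atoms.\<close>

lemma usc_singleton_continuous:
  fixes f :: "'a::uniform_space \<Rightarrow> 'a"
  assumes "continuous_on UNIV f"
  shows "usc (\<lambda>x. {f x})"
  unfolding usc_def
proof (intro ballI allI impI)
  fix x U assume "open U \<and> {f x} \<subseteq> U"
  then have "open (f -` U)" and "x \<in> f -` U"
    using assms by (auto simp: open_vimage)
  then have "\<forall>\<^sub>F (x', z) in uniformity. x' = x \<longrightarrow> z \<in> f -` U"
    by (simp add: open_uniformity)
  then have "entourage {(x', z). x' = x \<longrightarrow> z \<in> f -` U}"
    unfolding entourage_def by (rule eventually_mono) auto
  then show "\<exists>D. entourage D \<and> (\<forall>y. (x, y) \<in> D \<longrightarrow> {f y} \<subseteq> U)"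
    by auto
qed

lemma Dom_singleton [simp]: "Dom (\<lambda>x. {f x}) = UNIV"
  by (simp add: Dom_def)

lemma singleton_mu_semiconjugacy:
  fixes f :: "'a::uniform_space \<Rightarrow> 'a" and M :: "'a measure"
  assumes "sets M = sets borel" and "nonatomic M"
    and "continuous_on UNIV f"
    and "\<forall>g\<in>carrier G. \<Phi> g \<circ> f = f \<circ> \<Psi> g"
    and "\<forall>x. (x, f x) \<in> E"
  shows "\<exists>H. usc H \<and> (\<forall>x. compact (H x)) \<and>
           Dom H \<in> sets M \<and> UNIV - Dom H \<in> null_sets M \<and>
           (\<forall>x. H x \<in> null_sets M) \<and>
           Id_H_in H E \<and>
           (\<forall>g\<in>carrier G. \<forall>x. \<Phi> g ` H x = H (\<Psi> g x))"
proof (intro exI[of _ "\<lambda>x. {f x}"] conjI allI ballI)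
  have "space M = UNIV"
    using sets_eq_imp_space_eq[OF assms(1)] by simp
  then show "Dom (\<lambda>x. {f x}) \<in> sets M"
    using sets.top[of M] by simp
  show "{f x} \<in> null_sets M" for x
    using assms(2) by (simp add: nonatomic_def)
  show "\<Phi> g ` {f x} = {f (\<Psi> g x)}" if "g \<in> carrier G" for g x
    using fun_cong[OF assms(4)[rule_format, OF that], of x] by simp
qed (use assms(3,5) usc_singleton_continuous in \<open>auto simp: Id_H_in_def\<close>)

lemma stability_property_mono:
  assumes "\<exists>S. gen_set G S \<and> (\<forall>E. entourage E \<longrightarrow> (\<exists>D. entourage D \<and>
      (\<forall>\<Psi>. Act G \<Psi> \<and> (\<forall>x. \<forall>s\<in>S. (\<Psi> s x, \<Phi> s x) \<in> D) \<longrightarrow> P E \<Psi>)))"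
    and "\<And>E \<Psi>. P E \<Psi> \<Longrightarrow> Q E \<Psi>"
  shows "\<exists>S. gen_set G S \<and> (\<forall>E. entourage E \<longrightarrow> (\<exists>D. entourage D \<and>
      (\<forall>\<Psi>. Act G \<Psi> \<and> (\<forall>x. \<forall>s\<in>S. (\<Psi> s x, \<Phi> s x) \<in> D) \<longrightarrow> Q E \<Psi>)))"
  using assms(1)
  apply (elim ex_forward conj_forward all_forward imp_forward)
  apply (assumption | erule assms(2))+
  done

theorem theorem3p11:
  fixes G :: "('g, 'b) monoid_scheme"
    and \<Phi> :: "'g \<Rightarrow> 'a::uniform_space \<Rightarrow> 'a"
    and M :: "'a measure"
  assumes "group G"
    and "finitely_generated G"
    and "Act G \<Phi>"
    and "topologically_stable G \<Phi>"
    and "sets M = sets borel"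
    and "nonatomic M"
  shows "mu_topologically_stable M G \<Phi>"
  using assms(4) unfolding topologically_stable_def mu_topologically_stable_def
proof (rule stability_property_mono)
  fix E :: "('a \<times> 'a) set" and \<Psi> :: "'g \<Rightarrow> 'a \<Rightarrow> 'a"
  assume "\<exists>f. continuous_on UNIV f \<and> (\<forall>g\<in>carrier G. \<Phi> g \<circ> f = f \<circ> \<Psi> g) \<and>
      (\<forall>x. (x, f x) \<in> E)"
  then show "\<exists>H. usc H \<and> (\<forall>x. compact (H x)) \<and> Dom H \<in> sets M \<and>
      UNIV - Dom H \<in> null_sets M \<and> (\<forall>x. H x \<in> null_sets M) \<and> Id_H_in H E \<and>
      (\<forall>g\<in>carrier G. \<forall>x. \<Phi> g ` H x = H (\<Psi> g x))"
    using singleton_mu_semiconjugacy[OF assms(5,6)] by (elim exE conjE)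
qed

end
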